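(* Let $f\colon\mathbb Z_2\to\mathbb Z_2$ be a transitive T-function which is uniformly differentiable modulo $4$, and let $x_0\in\mathbb Z_2$. For $n,i\ge 0$ put $\chi_n^i=\delta_n(f^i(x_0))\in\{0,1\}$. Then there exists a binary sequence $(y(i))_{i=0}^\infty$, which does not depend on $n$ and whose shortest period has length $2^K$ for some integer $0\le K\le N_2(f)$, such that for every $n\ge N_2(f)+1$ and every $i=0,1,2,\ldots$, $$\chi_n^{i+2^{n-1}}\equiv\chi_{n-1}^i+\chi_n^i+\chi_{n-1}^0+\chi_n^0+\chi_n^{2^{n-1}}+y(i)\pmod 2.$$
   Context: $\mathbb Z_2$ denotes the ring of 2-adic integers; every $x\in\mathbb Z_2$ has a unique expansion $x=\sum_{j\ge0}\delta_j(x)2^j$ with $\delta_j(x)\in\{0,1\}$, and $\operatorname{ord}_2 h$ denotes the 2-adic valuation of $h$. A T-function is a map $f\colon\mathbb Z_2\to\mathbb Z_2$ such that $a\equiv b\pmod{2^s}$ implies $f(a)\equiv f(b)\pmod{2^s}$ for all $s$ (equivalently, $f$ is 1-Lipschitz for the 2-adic metric); then $f\bmod 2^n$ is a well-defined map of $\mathbb Z/2^n\mathbb Z$. $f$ is transitive if for every $n\ge1$ the reduced map $f\bmod 2^n$ is a permutation of $\mathbb Z/2^n\mathbb Z$ consisting of a single cycle (of length $2^n$). $f^i$ denotes the $i$-th iterate, $f^0=\mathrm{id}$. Given $M\ge1$, $f$ is uniformly differentiable modulo $2^M$ if there exist a function $f'_M\colon\mathbb Z_2\to\mathbb Z_2$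 (the derivative modulo $2^M$) and $K\in\mathbb N$ such that for all $x\in\mathbb Z_2$ and all nonzero $h\in\mathbb Z_2$ with $h\equiv0\pmod{2^K}$ one has $f(x+h)\equiv f(x)+f'_M(x)\,h\pmod{2^{\operatorname{ord}_2h+M}}$; the least such $K$ is denoted $N_M(f)$. *)

theory Defs
  imports Main
begin

text \<open>A 2-adic integer is a compatible sequence of residues x n in {0..<2^n}.\<close>

typedef z2 = "{x :: nat \<Rightarrow> int. \<forall>n. 0 \<le> x n \<and> x n < 2 ^ n \<and> x (Suc n) mod 2 ^ n = x n}"
  by (rule exI[of _ "\<lambda>_. 0"]) simp

definition res :: "z2 \<Rightarrow> nat \<Rightarrow> int" where
  "res x n = Rep_z2 x n"

definition z2_of_int :: "int \<Rightarrow> z2" where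
  "z2_of_int k = Abs_z2 (\<lambda>n. k mod 2 ^ n)"

instantiation z2 :: "{zero, plus, times}"
begin
definition zero_z2_def: "0 = z2_of_int 0"
definition plus_z2_def: "a + b = Abs_z2 (\<lambda>n. (res a n + res b n) mod 2 ^ n)"
definition times_z2_def: "a * b = Abs_z2 (\<lambda>n. (res a n * res b n) mod 2 ^ n)"
instance ..
end

definition digit :: "nat \<Rightarrow> z2 \<Rightarrow> int" where
  "digit j x = res x (Suc j) div 2 ^ j"

definition ord2 :: "z2 \<Rightarrow> nat" where
  "ord2 h = (LEAST n. res h (Suc n) \<noteq> 0)"

definition is_T_function :: "(z2 \<Rightarrow> z2) \<Rightarrow> bool" where
  "is_T_function f \<longleftrightarrow> (\<forall>a b s. res a s = res b s \<longrightarrow> res (f a) s = res (f b) s)"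

definition red_map :: "(z2 \<Rightarrow> z2) \<Rightarrow> nat \<Rightarrow> int \<Rightarrow> int" where
  "red_map f n r = res (f (z2_of_int r)) n"

definition transitive :: "(z2 \<Rightarrow> z2) \<Rightarrow> bool" where
  "transitive f \<longleftrightarrow> (\<forall>n\<ge>1.
      bij_betw (red_map f n) {0..<2 ^ n} {0..<2 ^ n} \<and>
      (\<forall>r\<in>{0..<2 ^ n}. \<exists>i. (red_map f n ^^ i) 0 = r))"

definition udiff_with :: "(z2 \<Rightarrow> z2) \<Rightarrow> nat \<Rightarrow> nat \<Rightarrow> bool" where
  "udiff_with f M K \<longleftrightarrow> (\<exists>f' :: z2 \<Rightarrow> z2. \<forall>x h. h \<noteq> 0 \<and> res h K = 0 \<longrightarrow>
       res (f (x + h)) (ord2 h + M) = res (f x + f' x * h) (ord2 h + M))"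

definition unif_diff :: "(z2 \<Rightarrow> z2) \<Rightarrow> nat \<Rightarrow> bool" where
  "unif_diff f M \<longleftrightarrow> (\<exists>K. udiff_with f M K)"

definition N_const :: "nat \<Rightarrow> (z2 \<Rightarrow> z2) \<Rightarrow> nat" where
  "N_const M f = (LEAST K. udiff_with f M K)"

end

theory Submission
  imports Defs "HOL-Number_Theory.Cong" "HOL-Computational_Algebra.Primes"
begin

text \<open>
  Write x_i = f^i(x0). Since f mod 2^n is a single cycle of length 2^n, the points x_i and
  x_(i+2^m) agree modulo 2^m but not modulo 2^(m+1), so x_(i+2^m) = x_i + 2^m s_m(i)
  (mod 2^(m+2)) with s_m(i) odd, and the digit chi_(m+1)(i + 2^m) is chi_(m+1)(i) + chi_m(i)
  plus the second binary digit of s_m(i). For m >= N = N_2(f), uniform differentiability gives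
  s_m(i+1) = f'(x_i) s_m(i) (mod 4), hence s_m(i) = P(i) s_m(0) (mod 4) with
  P(i) = prod_(j<i) f'(x_j). On odd numbers the second digit is additive, which yields the
  recurrence with y(i) the second digit of P(i). The derivative modulo 4 depends only on
  x mod 2^N, so P(i + 2^N) = P(i) P(2^N), and P(2^N) = 1 (mod 4) because s_N(2^N) + s_N(0) is
  twice the odd number s_(N+1)(0). Hence y has period 2^N, and so its least period is a
  power of two.
\<close>

section \<open>Residues of 2-adic integers\<close>

lemma res_nonneg [simp]: "0 \<le> res x n"
  and res_less [simp]: "res x n < 2 ^ n"
  and res_Suc_mod: "res x (Suc n) mod 2 ^ n = res x n"
  using Rep_z2[of x] unfolding res_def by auto

lemma res_mod_le: "n \<le> m \<Longrightarrow> res x m mod 2 ^ n = res x n"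
proof (induction m rule: dec_induct)
  case (step m)
  then have "res x (Suc m) mod 2 ^ n = res x (Suc m) mod 2 ^ m mod 2 ^ n"
    by (simp add: mod_mod_cancel le_imp_power_dvd)
  with step show ?case by (simp add: res_Suc_mod)
qed simp

lemma res_0 [simp]: "res x 0 = 0"
  using res_less[of x 0] res_nonneg[of x 0] unfolding power_0 by linarith

lemma res_eq_mono: "n \<le> m \<Longrightarrow> res x m = res y m \<Longrightarrow> res x n = res y n"
  by (metis res_mod_le)

lemma res_cong: "i \<le> j \<Longrightarrow> [res x j = res x i] (mod 2 ^ i)"
  by (simp add: cong_def res_mod_le)

lemma res_eq_iff_cong: "res y j = res x j \<longleftrightarrow> [res y j = res x j] (mod 2 ^ j)"
  by (simp add: cong_def res_mod_le)

lemma res_eq_iff_dvd: "res y j = res x j \<longleftrightarrow> 2 ^ j dvd res y j - res x j"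
  by (simp add: res_eq_iff_cong cong_iff_dvd_diff)

lemma z2_eq_iff: "x = y \<longleftrightarrow> (\<forall>n. res x n = res y n)"
  unfolding res_def using Rep_z2_inject by auto

lemma res_Abs_z2:
  assumes "\<And>n. [c (Suc n) = c n] (mod 2 ^ n)"
  shows "res (Abs_z2 (\<lambda>n. c n mod 2 ^ n)) n = c n mod 2 ^ n"
proof -
  have "c (Suc n) mod 2 ^ Suc n mod 2 ^ n = c n mod 2 ^ n" for n
    using assms[of n] by (simp add: cong_def mod_mod_cancel)
  then show ?thesis unfolding res_def by (simp add: Abs_z2_inverse)
qed

lemma res_z2_of_int: "res (z2_of_int k) n = k mod 2 ^ n"
  unfolding z2_of_int_def by (rule res_Abs_z2[where c = "\<lambda>_. k"]) simp

lemma res_zero [simp]: "res 0 n = 0"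
  by (simp add: zero_z2_def res_z2_of_int)

lemma res_plus: "res (a + b) n = (res a n + res b n) mod 2 ^ n"
  unfolding plus_z2_def
  by (rule res_Abs_z2) (intro cong_add; simp add: cong_def res_Suc_mod)

lemma res_times: "res (a * b) n = (res a n * res b n) mod 2 ^ n"
  unfolding times_z2_def
  by (rule res_Abs_z2) (intro cong_mult; simp add: cong_def res_Suc_mod)

instantiation z2 :: minus
begin
definition minus_z2_def: "a - b = Abs_z2 (\<lambda>n. (res a n - res b n) mod 2 ^ n)"
instance ..
end

lemma res_minus: "res (a - b) n = (res a n - res b n) mod 2 ^ n"
  unfolding minus_z2_def
  by (rule res_Abs_z2) (intro cong_diff; simp add: cong_def res_Suc_mod)

lemma z2_add_diff_cancel: "x + (y - x) = (y :: z2)"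
  by (simp only: z2_eq_iff res_plus res_minus) (simp add: mod_add_right_eq)

lemma res_minus_eq_0_iff: "res (y - x) n = 0 \<longleftrightarrow> res y n = res x n"
  by (simp add: res_minus res_eq_iff_cong cong_iff_dvd_diff dvd_eq_mod_eq_0)

lemma res_diff_odd_part:
  assumes "res y k = res x k" and "res y (Suc k) \<noteq> res x (Suc k)" and "Suc k \<le> j"
  obtains u where "res y j - res x j = 2 ^ k * u" and "odd u"
proof -
  have "[res y j - res x j = res y k - res x k] (mod 2 ^ k)"
    using assms(3) by (intro cong_diff res_cong) simp_all
  then have "2 ^ k dvd res y j - res x j"
    using assms(1) by (simp add: cong_0_iff)
  then obtain u where u: "res y j - res x j = 2 ^ k * u" ..
  have "[res y j - res x j = res y (Suc k) - res x (Suc k)] (mod 2 ^ Suc k)"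
    using assms(3) by (intro cong_diff res_cong) simp_all
  moreover have "\<not> 2 ^ Suc k dvd res y (Suc k) - res x (Suc k)"
    using assms(2) res_eq_iff_cong cong_iff_dvd_diff by metis
  ultimately have "\<not> 2 ^ Suc k dvd 2 ^ k * u"
    unfolding u using cong_dvd_iff by blast
  then have "odd u"
    by (auto elim!: evenE)
  with u that show ?thesis by blast
qed

lemma first_disagreement:
  assumes "res x N = res y N" and "x \<noteq> y"
  obtains k where "N \<le> k" and "res y k = res x k" and "res y (Suc k) \<noteq> res x (Suc k)"
proof -
  have "\<exists>j. res y j \<noteq> res x j"
    using assms(2) by (metis z2_eq_iff)
  then obtain j where j: "res y j \<noteq> res x j" and below: "\<And>i. i < j \<Longrightarrow> res y i = res x i"
    unfolding exists_least_iff[of "\<lambda>j. res y j \<noteq> res x j"] by blast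
  have "N < j"
    using j res_eq_mono[of j N y x] assms(1) by (metis not_less)
  then obtain k where "j = Suc k" and "N \<le> k"
    by (metis less_imp_Suc_add le_add1)
  with j below that show ?thesis by simp
qed

lemma
  assumes "res y k = res x k" and "res y (Suc k) \<noteq> res x (Suc k)"
  shows minus_neq_0_if_disagree: "y - x \<noteq> 0"
    and ord2_minus_if_disagree: "ord2 (y - x) = k"
proof -
  show "y - x \<noteq> 0"
    using assms(2) res_minus_eq_0_iff[of y x "Suc k"] by auto
  show "ord2 (y - x) = k"
    unfolding ord2_def res_minus_eq_0_iff
  proof (rule Least_equality)
    show "k \<le> j" if "res y (Suc j) \<noteq> res x (Suc j)" for j
      using that assms(1) res_eq_mono[of "Suc j" k y x] by (metis not_less_eq_eq)
  qed (use assms(2) in simp)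
qed

section \<open>Single cycles and transitive T-functions\<close>

lemma card_le_period:
  assumes "finite S" and "\<forall>r\<in>S. \<exists>i. (g ^^ i) a = r" and "0 < p" and "(g ^^ p) a = a"
  shows "card S \<le> p"
proof -
  have "S \<subseteq> (\<lambda>i. (g ^^ i) a) ` {..<p}"
  proof
    fix r assume "r \<in> S"
    then obtain i where "(g ^^ i) a = r"
      using assms(2) by blast
    then have "r = (g ^^ (i mod p)) a"
      using funpow_mod_eq[OF assms(4)] by simp
    then show "r \<in> (\<lambda>i. (g ^^ i) a) ` {..<p}"
      using assms(3) by simp
  qed
  then show ?thesis
    using surj_card_le[of "{..<p}"] by simp
qed

lemma funpow_card_cycle:
  assumes "bij_betw g S S" and "finite S" and "a \<in> S" and "\<forall>r\<in>S. \<exists>i. (g ^^ i) a = r"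
  shows "(g ^^ card S) a = a"
proof -
  have orbit_in: "(g ^^ i) a \<in> S" for i
    using bij_betw_funpow[OF assms(1)] assms(3) bij_betw_apply by fast
  have "\<not> inj_on (\<lambda>i. (g ^^ i) a) {..card S}"
    using card_inj_on_le[of "\<lambda>i. (g ^^ i) a" "{..card S}" S] orbit_in assms(2) by auto
  then obtain c d where "c < d" and "d \<le> card S" and "(g ^^ c) a = (g ^^ d) a"
    unfolding inj_on_def by (metis atMost_iff linorder_neqE_nat)
  moreover have "(g ^^ c) ((g ^^ (d - c)) a) = (g ^^ (c + (d - c))) a"
    by (simp add: funpow_add)
  ultimately have "(g ^^ c) ((g ^^ (d - c)) a) = (g ^^ c) a"
    by simp
  then have period: "(g ^^ (d - c)) a = a"
    using bij_betw_imp_inj_on[OF bij_betw_funpow[OF assms(1)]] orbit_in assms(3)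
    by (metis inj_on_eq_iff)
  then have "card S \<le> d - c"
    using card_le_period[OF assms(2,4)] \<open>c < d\<close> by simp
  with period \<open>d \<le> card S\<close> show ?thesis
    by (metis diff_le_self le_antisym order_trans)
qed

lemma bij_betw_funpow_fixed_iff:
  assumes "bij_betw g S S" and "a \<in> S"
  shows "(g ^^ p) ((g ^^ i) a) = (g ^^ i) a \<longleftrightarrow> (g ^^ p) a = a"
proof -
  have "(g ^^ p) ((g ^^ i) a) = (g ^^ i) ((g ^^ p) a)"
    by (metis add.commute comp_apply funpow_add)
  moreover have "(g ^^ p) a \<in> S"
    using bij_betw_funpow[OF assms(1)] assms(2) bij_betw_apply by fast
  ultimately show ?thesis
    using bij_betw_imp_inj_on[OF bij_betw_funpow[OF assms(1)]] assms(2)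
    by (metis inj_on_eq_iff)
qed

lemma card_pow2_interval: "card {0..<(2::int) ^ n} = 2 ^ n"
  by (simp add: nat_power_eq)

lemma transitive_red_map_cycle:
  assumes "transitive f" and "1 \<le> n" and "r \<in> {0..<2 ^ n}"
  shows red_map_funpow_pow2: "(red_map f n ^^ 2 ^ n) r = r"
    and red_map_funpow_not_fixed: "0 < p \<Longrightarrow> p < 2 ^ n \<Longrightarrow> (red_map f n ^^ p) r \<noteq> r"
proof -
  let ?g = "red_map f n" and ?S = "{0..<(2::int) ^ n}"
  have bij: "bij_betw ?g ?S ?S" and reach: "\<forall>r\<in>?S. \<exists>i. (?g ^^ i) 0 = r"
    using assms(1,2) unfolding transitive_def by auto
  obtain i where r: "r = (?g ^^ i) 0"
    using reach assms(3) by metis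
  have zero: "(0::int) \<in> ?S"
    by simp
  have "(?g ^^ p) r = r \<longleftrightarrow> (?g ^^ p) 0 = 0" for p
    unfolding r by (rule bij_betw_funpow_fixed_iff[OF bij zero])
  then show "(?g ^^ 2 ^ n) r = r"
    using funpow_card_cycle[OF bij _ zero reach] unfolding card_pow2_interval by simp
  show "(?g ^^ p) r \<noteq> r" if "0 < p" and "p < 2 ^ n"
    using card_le_period[OF _ reach that(1)] that(2) \<open>(?g ^^ p) r = r \<longleftrightarrow> (?g ^^ p) 0 = 0\<close>
    unfolding card_pow2_interval by fastforce
qed

lemma res_T_function: "is_T_function f \<Longrightarrow> res (f x) n = red_map f n (res x n)"
  unfolding is_T_function_def red_map_def by (metis res_z2_of_int res_mod_le order_refl)

lemma res_funpow_T_function: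
  "is_T_function f \<Longrightarrow> res ((f ^^ i) x) n = (red_map f n ^^ i) (res x n)"
  by (induction i) (simp_all add: res_T_function)

context
  fixes f :: "z2 \<Rightarrow> z2"
  assumes T_function: "is_T_function f" and transitive: "transitive f"
begin

lemma res_orbit_shift: "res ((f ^^ (i + p)) x) n = (red_map f n ^^ p) (res ((f ^^ i) x) n)"
  by (simp only: res_funpow_T_function[OF T_function] add.commute[of i p] funpow_add comp_apply)

lemma res_orbit_period: "res ((f ^^ (i + 2 ^ n)) x) n = res ((f ^^ i) x) n"
proof (cases "n = 0")
  case False
  then show ?thesis
    using red_map_funpow_pow2[OF transitive] by (simp add: res_orbit_shift)
qed simp

lemma res_orbit_half_period: "res ((f ^^ (i + 2 ^ m)) x) (Suc m) \<noteq> res ((f ^^ i) x) (Suc m)"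
  using red_map_funpow_not_fixed[OF transitive, of "Suc m" "res ((f ^^ i) x) (Suc m)" "2 ^ m"]
    res_less[of "(f ^^ i) x" "Suc m"]
  by (simp add: res_orbit_shift)

end

section \<open>Derivatives modulo \<open>2\<^sup>M\<close>\<close>

definition derivative_mod :: "(z2 \<Rightarrow> z2) \<Rightarrow> (z2 \<Rightarrow> z2) \<Rightarrow> nat \<Rightarrow> nat \<Rightarrow> bool" where
  "derivative_mod f f' M K \<longleftrightarrow> (\<forall>x h. h \<noteq> 0 \<and> res h K = 0 \<longrightarrow>
     res (f (x + h)) (ord2 h + M) = res (f x + f' x * h) (ord2 h + M))"

lemma udiff_with_iff_derivative_mod: "udiff_with f M K \<longleftrightarrow> (\<exists>f'. derivative_mod f f' M K)"
  unfolding udiff_with_def derivative_mod_def ..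

lemma derivative_mod_cong:
  assumes deriv: "derivative_mod f f' M K" and "K \<le> k"
    and agree: "res y k = res x k" and disagree: "res y (Suc k) \<noteq> res x (Suc k)"
    and j_le: "j \<le> k + M"
  shows "[res (f y) j = res (f x) j + res (f' x) j * (res y j - res x j)] (mod 2 ^ j)"
proof -
  let ?L = "k + M"
  have "y - x \<noteq> 0" and "res (y - x) K = 0"
    using minus_neq_0_if_disagree[OF agree disagree] res_eq_mono[OF \<open>K \<le> k\<close> agree]
    by (simp_all add: res_minus_eq_0_iff)
  then have "res (f (x + (y - x))) (ord2 (y - x) + M) = res (f x + f' x * (y - x)) (ord2 (y - x) + M)"
    using deriv unfolding derivative_mod_def by blast
  then have "res (f y) ?L = res (f x + f' x * (y - x)) ?L"
    by (simp add: z2_add_diff_cancel ord2_minus_if_disagree[OF agree disagree])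
  then have "[res (f y) ?L = res (f x) ?L + res (f' x) ?L * (res y ?L - res x ?L)] (mod 2 ^ ?L)"
    by (simp add: res_plus res_times res_minus cong_def mod_simps)
  then have "[res (f y) ?L = res (f x) ?L + res (f' x) ?L * (res y ?L - res x ?L)] (mod 2 ^ j)"
    by (rule cong_dvd_modulus[OF _ le_imp_power_dvd[OF j_le]])
  moreover have "[res a ?L = res a j] (mod 2 ^ j)" for a
    using j_le by (rule res_cong)
  ultimately have "[res (f y) ?L = res (f x) j + res (f' x) j * (res y j - res x j)] (mod 2 ^ j)"
    by (meson cong_add cong_diff cong_mult cong_trans)
  then show ?thesis
    using cong_trans[OF cong_sym[OF res_cong[OF j_le]]] by blast
qed

lemma res_reflection: "[res (x' + (x' - x)) j = 2 * res x' j - res x j] (mod 2 ^ j)"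
  by (simp add: res_plus res_minus cong_def mod_simps)

lemma
  assumes agree: "res x' k = res x k" and disagree: "res x' (Suc k) \<noteq> res x (Suc k)"
  shows reflection_agree: "res (x' + (x' - x)) k = res x' k"
    and reflection_disagree: "res (x' + (x' - x)) (Suc k) \<noteq> res x' (Suc k)"
    and reflection_agree_Suc: "res (x' + (x' - x)) (Suc k) = res x (Suc k)"
    and reflection_disagree_Suc: "res (x' + (x' - x)) (Suc (Suc k)) \<noteq> res x (Suc (Suc k))"
proof -
  let ?z = "x' + (x' - x)"
  have z_x': "res ?z j = res x' j \<longleftrightarrow> res x' j = res x j" for j
  proof -
    have "[res ?z j - res x' j = res x' j - res x j] (mod 2 ^ j)"
      using cong_diff[OF res_reflection cong_refl, of x' x j "res x' j"] by simp
    then show ?thesis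
      by (simp add: res_eq_iff_dvd cong_dvd_iff)
  qed
  have z_x: "res ?z j = res x j \<longleftrightarrow> 2 ^ j dvd 2 * (res x' j - res x j)" for j
  proof -
    have "[res ?z j - res x j = 2 * (res x' j - res x j)] (mod 2 ^ j)"
      using cong_diff[OF res_reflection cong_refl, of x' x j "res x j"] by (simp add: algebra_simps)
    then show ?thesis
      by (simp add: res_eq_iff_dvd[of ?z] cong_dvd_iff)
  qed
  show "res ?z k = res x' k" and "res ?z (Suc k) \<noteq> res x' (Suc k)"
    unfolding z_x' using agree disagree .
  obtain u where "res x' (Suc k) - res x (Suc k) = 2 ^ k * u"
    using res_diff_odd_part[OF agree disagree, of "Suc k"] by blast
  then show "res ?z (Suc k) = res x (Suc k)"
    by (simp add: z_x)
  obtain v where "res x' (Suc (Suc k)) - res x (Suc (Suc k)) = 2 ^ k * v" and "odd v"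
    using res_diff_odd_part[OF agree disagree le_SucI[OF order_refl]] by blast
  then show "res ?z (Suc (Suc k)) \<noteq> res x (Suc (Suc k))"
    by (simp add: z_x) presburger
qed

lemma derivative_mod_locally_constant:
  assumes deriv: "derivative_mod f f' M K" and "res x K = res x' K"
  shows "res (f' x) M = res (f' x') M"
proof (cases "x = x' \<or> M = 0")
  case False
  then obtain k where "K \<le> k" and agree: "res x' k = res x k"
    and disagree: "res x' (Suc k) \<noteq> res x (Suc k)"
    using first_disagreement assms(2) by metis
  \<comment> \<open>z = 2x' - x agrees with x' exactly up to level k and with x exactly up to level k + 1;
    the three first-order expansions along x, x', z then cancel to (F' - F)(x' - x) = 0\<close>
  define z where "z = x' + (x' - x)"
  let ?L = "k + M" and ?r = "\<lambda>a. res a (k + M)"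
  let ?F = "?r (f' x)" and ?F' = "?r (f' x')"
  let ?e1 = "?r (f x') - (?r (f x) + ?F * (?r x' - ?r x))"
  let ?e2 = "?r (f z) - (?r (f x') + ?F' * (?r z - ?r x'))"
  let ?e3 = "?r (f z) - (?r (f x) + ?F * (?r z - ?r x))"
  let ?e4 = "(?r z - ?r x') - (?r x' - ?r x)"
  have "2 ^ ?L dvd ?e1"
    unfolding cong_iff_dvd_diff[symmetric]
    by (rule derivative_mod_cong[OF deriv \<open>K \<le> k\<close> agree disagree]) simp
  moreover have "2 ^ ?L dvd ?e2"
    unfolding cong_iff_dvd_diff[symmetric] z_def
    by (rule derivative_mod_cong[OF deriv \<open>K \<le> k\<close> reflection_agree[OF agree disagree]
          reflection_disagree[OF agree disagree]]) simp
  moreover have "2 ^ ?L dvd ?e3"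
    unfolding cong_iff_dvd_diff[symmetric] z_def
    by (rule derivative_mod_cong[OF deriv le_SucI[OF \<open>K \<le> k\<close>] reflection_agree_Suc[OF agree disagree]
          reflection_disagree_Suc[OF agree disagree]]) simp
  moreover have "2 ^ ?L dvd ?e4"
    unfolding cong_iff_dvd_diff[symmetric] z_def
    using cong_diff[OF res_reflection cong_refl, of x' x ?L "?r x'"] by simp
  moreover have "(?F' - ?F) * (?r x' - ?r x) = ?e3 - ?e1 - ?e2 - (?F' - ?F) * ?e4"
    by (simp add: algebra_simps)
  ultimately have "2 ^ ?L dvd (?F' - ?F) * (?r x' - ?r x)"
    by (metis dvd_diff dvd_mult)
  moreover obtain u where "?r x' - ?r x = 2 ^ k * u" and "odd u"
    using res_diff_odd_part[OF agree disagree, of ?L] False by auto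
  ultimately have "2 ^ M dvd (?F' - ?F) * u"
    by (simp add: power_add mult.left_commute)
  then have "2 ^ M dvd ?F' - ?F"
    using \<open>odd u\<close> by (simp add: coprime_dvd_mult_left_iff)
  moreover have "[?F' - ?F = res (f' x') M - res (f' x) M] (mod 2 ^ M)"
    by (intro cong_diff res_cong) simp_all
  ultimately have "2 ^ M dvd res (f' x') M - res (f' x) M"
    using cong_dvd_iff by blast
  then show ?thesis
    using res_eq_iff_dvd[of "f' x'" M "f' x"] by simp
qed auto

section \<open>The second binary digit\<close>

lemma div2_mod2_eq_mod4_div2: "a div 2 mod 2 = a mod 4 div 2" for a :: int
  using zmod_zmult2_eq[of 2 a 2] by simp

lemma div2_mod2_cong4: "[a = b] (mod 4) \<Longrightarrow> a div 2 mod 2 = b div 2 mod 2" for a b :: int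
  by (simp add: div2_mod2_eq_mod4_div2 cong_def)

lemma odd_mult_div2_mod2:
  fixes a b :: int
  assumes "odd a" and "odd b"
  shows "(a * b) div 2 mod 2 = (a div 2 + b div 2) mod 2"
proof -
  obtain \<alpha> \<beta> where a: "a = 2 * \<alpha> + 1" and b: "b = 2 * \<beta> + 1"
    using assms by (auto elim!: oddE)
  then have "a * b = 2 * (2 * (\<alpha> * \<beta>) + (\<alpha> + \<beta>)) + 1"
    by (simp add: algebra_simps)
  then show ?thesis
    unfolding a b by simp
qed

lemma odd_factor_div2_mod2:
  fixes s s0 q :: int
  assumes "[s = q * s0] (mod 4)" and "odd s" and "odd s0"
  shows "odd q" and "s div 2 mod 2 = (q div 2 + s0 div 2) mod 2"
proof -
  have "[s = q * s0] (mod 2)"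
    using assms(1) by (rule cong_dvd_modulus) simp
  then show "odd q"
    using assms(2) by (auto simp: cong_def)
  then show "s div 2 mod 2 = (q div 2 + s0 div 2) mod 2"
    using div2_mod2_cong4[OF assms(1)] odd_mult_div2_mod2[OF _ assms(3)] by simp
qed

lemma odd_add_div2_mod2:
  fixes a s :: int
  assumes "odd s"
  shows "(a + s) div 2 mod 2 = (a div 2 + a mod 2 + s div 2) mod 2"
proof -
  obtain \<sigma> where s: "s = 2 * \<sigma> + 1"
    using assms by (auto elim: oddE)
  have "a + s = (1 - a mod 2) + (a div 2 + \<sigma> + a mod 2) * 2"
    using s div_mult_mod_eq[of a 2] by (simp add: algebra_simps)
  then have "(a + s) div 2 = (1 - a mod 2) div 2 + (a div 2 + \<sigma> + a mod 2)"
    by (simp only: div_mult_self1[of 2, simplified])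
  then have "(a + s) div 2 = a div 2 + \<sigma> + a mod 2"
    by simp
  then show ?thesis
    using s by (simp add: ac_simps)
qed

lemma odd_sum_div2_mod2:
  fixes s t v :: int
  assumes "odd s" and "odd t" and "s + t = 2 * v" and "odd v"
  shows "s div 2 mod 2 = t div 2 mod 2"
proof -
  obtain a b where s: "s = 2 * a + 1" and t: "t = 2 * b + 1"
    using assms(1,2) by (meson oddE)
  with assms(3) have "v = (a + b) + 1"
    by linarith
  with assms(4) have "2 dvd (a + b) - 2 * b"
    by simp
  then have "a mod 2 = b mod 2"
    by (simp only: mod_eq_dvd_iff diff_add_eq_diff_diff_swap add_diff_cancel) simp
  then show ?thesis
    unfolding s t by simp
qed

lemma mod2_add_relations:
  fixes a b c d e g s t p :: int
  assumes "a mod 2 = (b + c + s) mod 2" and "d mod 2 = (e + g + t) mod 2"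
    and "s mod 2 = (p + t) mod 2"
  shows "a mod 2 = (c + b + g + e + d + p) mod 2"
proof -
  have "a - (c + b + g + e + d + p)
      = (a - (b + c + s)) - (d - (e + g + t)) + (s - (p + t)) - 2 * (e + g)"
    by (simp add: algebra_simps)
  moreover have "2 dvd a - (b + c + s)" and "2 dvd d - (e + g + t)" and "2 dvd s - (p + t)"
    using assms by (simp_all only: mod_eq_dvd_iff)
  ultimately have "2 dvd a - (c + b + g + e + d + p)"
    by (metis dvd_add dvd_diff dvd_triv_left)
  then show ?thesis
    by (simp only: mod_eq_dvd_iff)
qed

lemma odd_mod4_eq_1: "odd q \<Longrightarrow> q div 2 mod 2 = 0 \<Longrightarrow> q mod 4 = 1" for q :: int
  unfolding div2_mod2_eq_mod4_div2 by presburger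

lemma
  shows res_div_pow_div2: "res x (m + 2) div 2 ^ m div 2 = digit (Suc m) x"
    and res_div_pow_mod2: "res x (m + 2) div 2 ^ m mod 2 = digit m x"
proof -
  have pow: "(2::int) ^ Suc m = 2 ^ m * 2"
    by simp
  show "res x (m + 2) div 2 ^ m div 2 = digit (Suc m) x"
    unfolding digit_def pow by (simp add: zdiv_zmult2_eq numeral_2_eq_2)
  have "res x (Suc m) = res x (m + 2) mod 2 ^ Suc m"
    using res_mod_le[of "Suc m" "m + 2" x] by simp
  also have "\<dots> = 2 ^ m * (res x (m + 2) div 2 ^ m mod 2) + res x (m + 2) mod 2 ^ m"
    unfolding pow by (rule zmod_zmult2_eq) simp
  finally show "res x (m + 2) div 2 ^ m mod 2 = digit m x"
    unfolding digit_def by simp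
qed

lemma digit_Suc_shift:
  assumes "res y (m + 2) = res x (m + 2) + 2 ^ m * s" and "odd s"
  shows "digit (Suc m) y mod 2 = (digit (Suc m) x + digit m x + s div 2) mod 2"
proof -
  let ?a = "res x (m + 2) div 2 ^ m"
  have "res y (m + 2) div 2 ^ m = ?a + s"
    using assms(1) by simp
  then have "digit (Suc m) y = (?a + s) div 2"
    by (simp only: res_div_pow_div2[symmetric])
  also have "\<dots> mod 2 = (?a div 2 + ?a mod 2 + s div 2) mod 2"
    using assms(2) by (rule odd_add_div2_mod2)
  also have "\<dots> = (digit (Suc m) x + digit m x + s div 2) mod 2"
    by (simp only: res_div_pow_div2 res_div_pow_mod2)
  finally show ?thesis .
qed

section \<open>Periodic sequences\<close>

lemma pow2_periodic_least_period:
  fixes y :: "nat \<Rightarrow> 'a"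
  assumes "\<And>i. y (i + 2 ^ N) = y i"
  obtains K where "K \<le> N" and "\<And>i. y (i + 2 ^ K) = y i"
    and "\<And>p. 0 < p \<Longrightarrow> p < 2 ^ K \<Longrightarrow> \<not> (\<forall>i. y (i + p) = y i)"
proof -
  let ?period = "\<lambda>p. 0 < p \<and> (\<forall>i. y (i + p) = y i)"
  define p0 where "p0 = (LEAST p. ?period p)"
  have "?period (2 ^ N)"
    using assms by simp
  then have p0: "?period p0"
    unfolding p0_def by (rule LeastI)
  have least: "p0 \<le> p" if "?period p" for p
    unfolding p0_def using that by (rule Least_le)
  have multiple: "y (i + p0 * k) = y i" for i k
  proof (induction k)
    case (Suc k)
    have "y (i + p0 * Suc k) = y (i + p0 * k + p0)"
      by (simp add: algebra_simps)
    with p0 Suc show ?case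
      by simp
  qed simp
  have "p0 dvd 2 ^ N"
  proof (rule ccontr)
    assume "\<not> p0 dvd 2 ^ N"
    then have "0 < 2 ^ N mod p0"
      by (simp add: dvd_eq_mod_eq_0)
    moreover have "y (i + 2 ^ N mod p0) = y i" for i
      using multiple[of "i + 2 ^ N mod p0" "2 ^ N div p0"] assms[of i] by (simp add: add.assoc)
    ultimately have "p0 \<le> 2 ^ N mod p0"
      using least by blast
    then show False
      using p0 by (meson leD mod_less_divisor)
  qed
  then obtain K where "K \<le> N" and "p0 = 2 ^ K"
    using divides_primepow_nat[OF two_is_prime_nat] by blast
  with p0 least that show ?thesis
    by (meson leD)
qed

lemma prod_lessThan_add_period:
  fixes g :: "nat \<Rightarrow> 'a :: comm_monoid_mult"
  assumes "\<And>j. g (j + p) = g j"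
  shows "(\<Prod>j<i + p. g j) = (\<Prod>j<i. g j) * (\<Prod>j<p. g j)"
  by (induction i) (simp_all add: assms mult_ac add.commute[of p])

section \<open>The recurrence along an orbit\<close>

\<comment> \<open>s_m(i) and P(i) of the proof idea\<close>
definition orbit_gap :: "(z2 \<Rightarrow> z2) \<Rightarrow> z2 \<Rightarrow> nat \<Rightarrow> nat \<Rightarrow> int" where
  "orbit_gap f x0 m i = (res ((f ^^ (i + 2 ^ m)) x0) (m + 2) - res ((f ^^ i) x0) (m + 2)) div 2 ^ m"

definition deriv_prod :: "(z2 \<Rightarrow> z2) \<Rightarrow> (z2 \<Rightarrow> z2) \<Rightarrow> z2 \<Rightarrow> nat \<Rightarrow> int" where
  "deriv_prod f f' x0 i = (\<Prod>j<i. res (f' ((f ^^ j) x0)) 2)"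

context
  fixes f :: "z2 \<Rightarrow> z2" and x0 :: z2
  assumes T_function: "is_T_function f" and transitive: "transitive f"
begin

lemma
  shows res_orbit_half_period_shift:
      "res ((f ^^ (i + 2 ^ m)) x0) (m + 2) = res ((f ^^ i) x0) (m + 2) + 2 ^ m * orbit_gap f x0 m i"
    and odd_orbit_gap: "odd (orbit_gap f x0 m i)"
proof -
  obtain u where "res ((f ^^ (i + 2 ^ m)) x0) (m + 2) - res ((f ^^ i) x0) (m + 2) = 2 ^ m * u"
    and "odd u"
    using res_diff_odd_part[OF res_orbit_period[OF T_function transitive, of i m x0]
        res_orbit_half_period[OF T_function transitive, of i m x0], of "m + 2"] by auto
  then show "res ((f ^^ (i + 2 ^ m)) x0) (m + 2) = res ((f ^^ i) x0) (m + 2) + 2 ^ m * orbit_gap f x0 m i"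
    and "odd (orbit_gap f x0 m i)"
    unfolding orbit_gap_def by simp_all
qed

context
  fixes f' :: "z2 \<Rightarrow> z2" and N :: nat
  assumes deriv: "derivative_mod f f' 2 N"
begin

lemma orbit_gap_Suc_cong:
  assumes "N \<le> m"
  shows "[orbit_gap f x0 m (Suc i) = res (f' ((f ^^ i) x0)) 2 * orbit_gap f x0 m i] (mod 4)"
proof -
  let ?x = "(f ^^ i) x0" and ?y = "(f ^^ (i + 2 ^ m)) x0" and ?L = "m + 2"
  let ?F = "res (f' ?x) ?L" and ?s = "orbit_gap f x0 m i" and ?s' = "orbit_gap f x0 m (Suc i)"
  have "[res (f ?y) ?L = res (f ?x) ?L + ?F * (res ?y ?L - res ?x ?L)] (mod 2 ^ ?L)"
    by (rule derivative_mod_cong[OF deriv assms res_orbit_period[OF T_function transitive]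
          res_orbit_half_period[OF T_function transitive]]) simp
  moreover have "res (f ?y) ?L = res (f ?x) ?L + 2 ^ m * ?s'"
    using res_orbit_half_period_shift[where i = "Suc i" and m = m]
    by simp
  moreover have "res ?y ?L - res ?x ?L = 2 ^ m * ?s"
    using res_orbit_half_period_shift[where i = i and m = m]
    by simp
  ultimately have "[2 ^ m * ?s' = 2 ^ m * (?F * ?s)] (mod 2 ^ m * 4)"
    by (simp add: cong_add_lcancel power_add ac_simps)
  then have "[?s' = ?F * ?s] (mod 4)"
    by (simp add: cong_iff_dvd_diff flip: right_diff_distrib)
  moreover have "[?F = res (f' ?x) 2] (mod 4)"
    using res_cong[of 2 ?L "f' ?x"] by simp
  ultimately show ?thesis
    using cong_scalar_right cong_trans by blast
qed

lemma orbit_gap_cong_deriv_prod: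
  assumes "N \<le> m"
  shows "[orbit_gap f x0 m i = deriv_prod f f' x0 i * orbit_gap f x0 m 0] (mod 4)"
proof (induction i)
  case (Suc i)
  let ?g = "res (f' ((f ^^ i) x0)) 2"
  have "[orbit_gap f x0 m (Suc i) = ?g * orbit_gap f x0 m i] (mod 4)"
    using assms by (rule orbit_gap_Suc_cong)
  moreover have "[?g * orbit_gap f x0 m i = ?g * (deriv_prod f f' x0 i * orbit_gap f x0 m 0)] (mod 4)"
    using Suc.IH by (rule cong_scalar_left)
  ultimately show ?case
    by (simp add: deriv_prod_def ac_simps cong_trans)
qed (simp add: deriv_prod_def)

lemma deriv_prod_add_period:
  "deriv_prod f f' x0 (i + 2 ^ N) = deriv_prod f f' x0 i * deriv_prod f f' x0 (2 ^ N)"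
  unfolding deriv_prod_def
  by (rule prod_lessThan_add_period)
    (rule derivative_mod_locally_constant[OF deriv res_orbit_period[OF T_function transitive]])

lemma deriv_prod_period_mod4: "deriv_prod f f' x0 (2 ^ N) mod 4 = 1"
proof -
  let ?q = "deriv_prod f f' x0 (2 ^ N)"
  let ?s0 = "orbit_gap f x0 N 0" and ?s1 = "orbit_gap f x0 N (2 ^ N)"
  let ?r = "\<lambda>i. res ((f ^^ i) x0) (N + 2)"
  note shift = res_orbit_half_period_shift[where m = N]
  note odd_gap = odd_orbit_gap[where m = N]
  have "[?s1 = ?q * ?s0] (mod 4)"
    by (rule orbit_gap_cong_deriv_prod) simp
  note q = odd_factor_div2_mod2[OF this odd_gap odd_gap]
  obtain v where v: "?r (0 + 2 ^ Suc N) - ?r 0 = 2 ^ Suc N * v" and "odd v"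
    using res_diff_odd_part[OF res_orbit_period[OF T_function transitive, of 0 "Suc N" x0]
        res_orbit_half_period[OF T_function transitive, of 0 "Suc N" x0], of "N + 2"] by auto
  have "?r (0 + 2 ^ Suc N) - ?r 0 = 2 ^ N * (?s1 + ?s0)"
    using shift[of "2 ^ N"] shift[of 0] by (simp add: algebra_simps mult_2)
  with v have "?s1 + ?s0 = 2 * v"
    by simp
  then have "?s1 div 2 mod 2 = ?s0 div 2 mod 2"
    using odd_sum_div2_mod2 odd_gap \<open>odd v\<close> by blast
  with q(2) have "[?q div 2 + ?s0 div 2 = 0 + ?s0 div 2] (mod 2)"
    by (simp add: cong_def)
  then have "?q div 2 mod 2 = 0"
    by (simp only: cong_add_rcancel) (simp add: cong_def)
  with q(1) show ?thesis
    by (rule odd_mod4_eq_1)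
qed

lemma deriv_prod_period_cong: "[deriv_prod f f' x0 (i + 2 ^ N) = deriv_prod f f' x0 i] (mod 4)"
  unfolding deriv_prod_add_period cong_def using deriv_prod_period_mod4
  by (metis mod_mult_right_eq mult.right_neutral)

lemma digit_recurrence:
  assumes "N \<le> m"
  shows "digit (Suc m) ((f ^^ (i + 2 ^ m)) x0) mod 2 =
    (digit m ((f ^^ i) x0) + digit (Suc m) ((f ^^ i) x0) + digit m x0 + digit (Suc m) x0
      + digit (Suc m) ((f ^^ (2 ^ m)) x0) + deriv_prod f f' x0 i div 2 mod 2) mod 2"
proof -
  note shift = digit_Suc_shift[OF res_orbit_half_period_shift odd_orbit_gap]
  note odd_gap = odd_orbit_gap[where m = m]
  have "orbit_gap f x0 m i div 2 mod 2
      = (deriv_prod f f' x0 i div 2 mod 2 + orbit_gap f x0 m 0 div 2) mod 2"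
    using odd_factor_div2_mod2(2)[OF orbit_gap_cong_deriv_prod[OF assms] odd_gap odd_gap]
    by (simp add: mod_add_left_eq)
  from mod2_add_relations[OF shift[of m i] shift[of m 0] this] show ?thesis
    by simp
qed

end

end

theorem theorem3p1:
  fixes f :: "z2 \<Rightarrow> z2" and x0 :: z2
  assumes "is_T_function f" and "transitive f" and "unif_diff f 2"
  defines "\<chi> \<equiv> (\<lambda>n i. digit n ((f ^^ i) x0))"
  shows "\<exists>y :: nat \<Rightarrow> int. (\<forall>i. y i \<in> {0, 1}) \<and>
           (\<exists>K. K \<le> N_const 2 f \<and> (\<forall>i. y (i + 2 ^ K) = y i) \<and>
                 (\<forall>p. 0 < p \<and> p < 2 ^ K \<longrightarrow> \<not> (\<forall>i. y (i + p) = y i))) \<and>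
           (\<forall>n i. n \<ge> N_const 2 f + 1 \<longrightarrow>
              (\<chi> n (i + 2 ^ (n - 1))) mod 2 = ( \<chi> (n - 1) i + \<chi> n i + \<chi> (n - 1) 0 + \<chi> n 0
                 + \<chi> n (2 ^ (n - 1)) + y i) mod 2)"
proof -
  define N where "N = N_const 2 f"
  have "udiff_with f 2 N"
    using assms(3) unfolding unif_diff_def N_def N_const_def by (rule LeastI_ex)
  then obtain f' where deriv: "derivative_mod f f' 2 N"
    unfolding udiff_with_iff_derivative_mod by blast
  define y where "y i = deriv_prod f f' x0 i div 2 mod 2" for i
  have period: "y (i + 2 ^ N) = y i" for i
    unfolding y_def by (rule div2_mod2_cong4[OF deriv_prod_period_cong[OF assms(1,2) deriv]])
  obtain K where "K \<le> N" and "\<And>i. y (i + 2 ^ K) = y i"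
    and "\<And>p. 0 < p \<Longrightarrow> p < 2 ^ K \<Longrightarrow> \<not> (\<forall>i. y (i + p) = y i)"
    using pow2_periodic_least_period[of y N, OF period] by blast
  moreover have "y i \<in> {0, 1}" for i
    unfolding y_def mod2_eq_if by simp
  moreover have "\<chi> n (i + 2 ^ (n - 1)) mod 2 = (\<chi> (n - 1) i + \<chi> n i + \<chi> (n - 1) 0 + \<chi> n 0
      + \<chi> n (2 ^ (n - 1)) + y i) mod 2" if n: "N + 1 \<le> n" for n i
  proof -
    obtain m where "n = Suc m" and "N \<le> m"
      using n by (cases n) auto
    then show ?thesis
      unfolding \<chi>_def y_def using digit_recurrence[OF assms(1,2) deriv \<open>N \<le> m\<close>, of i] by simp
  qed
  ultimately show ?thesis
    unfolding N_def by blast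
qed

end
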